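(* Let $C\in U(2)$ be a quantum coin. If $C$ is non-trivial, then there exist exactly two unit vectors $\gamma_1,\gamma_2\in\mathbb{C}^2$, counted up to multiplication by a global phase $e^{i\eta}$, such that the coin setups $(C,\gamma_1)$ and $(C,\gamma_2)$ are symmetric in distribution. If $C$ is trivial, then there exist uncountably many unit vectors $\gamma\in\mathbb{C}^2$, pairwise not equal up to a global phase, such that $(C,\gamma)$ is symmetric in distribution.
   Context: Let $\mathcal{H}=\ell^2(\mathbb{Z})\otimes\mathbb{C}^2$, with position basis $\{|j\rangle: j\in\mathbb{Z}\}$ of $\ell^2(\mathbb{Z})$ and orthonormal basis $\{|\uparrow\rangle,|\downarrow\rangle\}$ of $\mathbb{C}^2$. A (quantum) coin is any $C\in U(2)$, written $C=a|\uparrow\rangle\langle\uparrow|+b|\uparrow\rangle\langle\downarrow|+c|\downarrow\rangle\langle\uparrow|+d|\downarrow\rangle\langle\downarrow|$; $C$ is called trivial iff $abcd=0$, non-trivial otherwise. The conditional translation is $T=\sum_{j\in\mathbb{Z}}|j+1\rangle\langle j|\otimes|\uparrow\rangle\langle\uparrow|+\sum_{j\in\mathbb{Z}}|j-1\rangle\langle j|\otimes|\downarrow\rangle\langle\downarrow|$ and the walk operator is $W(C)=T(\mathbb{1}\otimes C)$. A coin setup is a pair $(C,\gamma)$ with $C\in U(2)$ and $\gamma\in\mathbb{C}^2$ a unit vector (the initial coin state). Its induced distributions are $p_{(C,\gamma)}(j,n)=\langle\psi_n|(|j\rangle\langle j|\otimes\mathbb{1})|\psi_n\rangle$ with $\psi_n=W(C)^n(|0\rangle\otimes\gamma)$,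 for $j\in\mathbb{Z}$, $n\in\mathbb{N}$. A coin setup is called symmetric in distribution if $p_{(C,\gamma)}(j,n)=p_{(C,\gamma)}(-j,n)$ for all $j\in\mathbb{Z}$ and all $n\in\mathbb{N}$. *)

theory Defs
  imports Complex_Main "HOL-Library.Countable_Set"
begin

text \<open>A coin C = a|u><u| + b|u><d| + c|d><u| + d|d><d| is represented by its
  matrix entries (a, b, c, d) w.r.t. the basis (up, down).  A vector of C^2 is a
  pair (up component, down component).\<close>

type_synonym coin = "complex \<times> complex \<times> complex \<times> complex"
type_synonym cvec = "complex \<times> complex"

definition coin_a :: "coin \<Rightarrow> complex" where "coin_a C = fst C"
definition coin_b :: "coin \<Rightarrow> complex" where "coin_b C = fst (snd C)"
definition coin_c :: "coin \<Rightarrow> complex" where "coin_c C = fst (snd (snd C))"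
definition coin_d :: "coin \<Rightarrow> complex" where "coin_d C = snd (snd (snd C))"

text \<open>C \<in> U(2): C^* C = 1 (for square matrices equivalent to C C^* = 1).\<close>
definition unitary2 :: "coin \<Rightarrow> bool" where
  "unitary2 C \<longleftrightarrow>
     cnj (coin_a C) * coin_a C + cnj (coin_c C) * coin_c C = 1 \<and>
     cnj (coin_b C) * coin_b C + cnj (coin_d C) * coin_d C = 1 \<and>
     cnj (coin_a C) * coin_b C + cnj (coin_c C) * coin_d C = 0"

definition trivial_coin :: "coin \<Rightarrow> bool" where
  "trivial_coin C \<longleftrightarrow> coin_a C * coin_b C * coin_c C * coin_d C = 0"

definition unit_vec :: "cvec \<Rightarrow> bool" where
  "unit_vec v \<longleftrightarrow> (cmod (fst v))\<^sup>2 + (cmod (snd v))\<^sup>2 = 1"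

definition coin_apply :: "coin \<Rightarrow> cvec \<Rightarrow> cvec" where
  "coin_apply C v = (coin_a C * fst v + coin_b C * snd v,
                     coin_c C * fst v + coin_d C * snd v)"

text \<open>States in l^2(Z) \<otimes> C^2 as functions int \<Rightarrow> C^2.  The walk operator
  W(C) = T (1 \<otimes> C): the up component moves j \<mapsto> j+1, the down component j \<mapsto> j-1.\<close>
definition walk :: "coin \<Rightarrow> (int \<Rightarrow> cvec) \<Rightarrow> (int \<Rightarrow> cvec)" where
  "walk C \<psi> = (\<lambda>j. (fst (coin_apply C (\<psi> (j - 1))), snd (coin_apply C (\<psi> (j + 1)))))"

definition init_state :: "cvec \<Rightarrow> int \<Rightarrow> cvec" where
  "init_state \<gamma> = (\<lambda>j. if j = 0 then \<gamma> else (0, 0))"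

definition walk_state :: "coin \<Rightarrow> cvec \<Rightarrow> nat \<Rightarrow> int \<Rightarrow> cvec" where
  "walk_state C \<gamma> n = (walk C ^^ n) (init_state \<gamma>)"

definition walk_prob :: "coin \<Rightarrow> cvec \<Rightarrow> int \<Rightarrow> nat \<Rightarrow> real" where
  "walk_prob C \<gamma> j n =
     (cmod (fst (walk_state C \<gamma> n j)))\<^sup>2 + (cmod (snd (walk_state C \<gamma> n j)))\<^sup>2"

definition symmetric_in_distribution :: "coin \<Rightarrow> cvec \<Rightarrow> bool" where
  "symmetric_in_distribution C \<gamma> \<longleftrightarrow>
     (\<forall>j n. walk_prob C \<gamma> j n = walk_prob C \<gamma> (- j) n)"

definition phase_equiv :: "cvec \<Rightarrow> cvec \<Rightarrow> bool" where
  "phase_equiv v w \<longleftrightarrow> (\<exists>\<eta>::real. v = (cis \<eta> * fst w, cis \<eta> * snd w))"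

end

theory Submission
  imports Defs "HOL-Analysis.Uncountable_Sets"
begin

(* If snd gamma = l * fst gamma with |l| = 1, and some unimodular z satisfies z a = d and
   z b l^2 = c, then psi_n(-j) arises from psi_n(j) by swapping the two coin components and
   multiplying by phases, so the distribution is symmetric.  For a non-trivial coin this is
   achieved by l^2 = ac/(bd), which gives the two classes (1, l)/sqrt 2 and (1, -l)/sqrt 2; for a
   trivial coin every unimodular l works.  Conversely, with (U, D) = C gamma, symmetry at time 1
   forces |U|^2 = |D|^2 = 1/2, and symmetry at time 3 makes the interference term K U (cnj D)
   purely imaginary of modulus |K|/2, so it takes at most two values; for a non-trivial coin
   K <> 0, and then this term determines (U, D), hence gamma, up to a phase. *)

lemma unitary2_orthogonal_cnj:
  assumes "unitary2 C"
  shows "coin_a C * cnj (coin_b C) + coin_c C * cnj (coin_d C) = 0"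
proof -
  have "cnj (cnj (coin_a C) * coin_b C + cnj (coin_c C) * coin_d C) = 0"
    using assms by (simp add: unitary2_def)
  then show ?thesis by (simp add: mult.commute)
qed

lemma unitary2_mult_cnj_eqs:
  assumes "unitary2 C"
  shows "coin_a C * cnj (coin_a C) = coin_d C * cnj (coin_d C)"
    and "coin_b C * cnj (coin_b C) = coin_c C * cnj (coin_c C)"
  using assms unitary2_orthogonal_cnj[OF assms] unfolding unitary2_def by algebra+

lemma cmod_eq_iff_mult_cnj: "cmod z = cmod w \<longleftrightarrow> z * cnj z = w * cnj w"
  by (metis complex_norm_square norm_ge_zero of_real_eq_iff power2_eq_iff_nonneg)

lemma unitary2_cmod_eqs:
  assumes "unitary2 C"
  shows "cmod (coin_a C) = cmod (coin_d C)" and "cmod (coin_b C) = cmod (coin_c C)"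
  using unitary2_mult_cnj_eqs[OF assms] by (simp_all add: cmod_eq_iff_mult_cnj)

lemma trivial_coin_cases:
  assumes "unitary2 C" and "trivial_coin C"
  shows "(coin_b C = 0 \<and> coin_c C = 0) \<or> (coin_a C = 0 \<and> coin_d C = 0)"
proof -
  have "coin_a C = 0 \<longleftrightarrow> coin_d C = 0" "coin_b C = 0 \<longleftrightarrow> coin_c C = 0"
    using unitary2_cmod_eqs[OF assms(1)] by (metis norm_eq_zero)+
  then show ?thesis using assms(2) by (auto simp: trivial_coin_def)
qed

lemma coin_apply_norm:
  assumes "unitary2 C"
  shows "(cmod (fst (coin_apply C v)))\<^sup>2 + (cmod (snd (coin_apply C v)))\<^sup>2
         = (cmod (fst v))\<^sup>2 + (cmod (snd v))\<^sup>2"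
proof -
  have "complex_of_real ((cmod (fst (coin_apply C v)))\<^sup>2 + (cmod (snd (coin_apply C v)))\<^sup>2)
        = complex_of_real ((cmod (fst v))\<^sup>2 + (cmod (snd v))\<^sup>2)"
    using assms unitary2_orthogonal_cnj[OF assms]
    unfolding of_real_add complex_norm_square unitary2_def coin_apply_def
    by (simp add: algebra_simps) algebra
  then show ?thesis by (simp only: of_real_eq_iff)
qed

lemma coin_apply_adjoint:
  assumes "unitary2 C"
  shows "cnj (coin_a C) * fst (coin_apply C v) + cnj (coin_c C) * snd (coin_apply C v) = fst v"
    and "cnj (coin_b C) * fst (coin_apply C v) + cnj (coin_d C) * snd (coin_apply C v) = snd v"
  using assms unitary2_orthogonal_cnj[OF assms]
  unfolding unitary2_def coin_apply_def fst_conv snd_conv by algebra+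

lemma coin_apply_inject:
  assumes "unitary2 C" and "coin_apply C v = coin_apply C w"
  shows "v = w"
  using coin_apply_adjoint[OF assms(1), of v] coin_apply_adjoint[OF assms(1), of w] assms(2)
  by (simp add: prod_eq_iff)

lemma coin_apply_scale:
  "coin_apply C (\<mu> * fst v, \<mu> * snd v)
   = (\<mu> * fst (coin_apply C v), \<mu> * snd (coin_apply C v))"
  by (simp add: coin_apply_def algebra_simps)

lemma phase_equiv_iff_unimodular:
  "phase_equiv v w \<longleftrightarrow> (\<exists>\<mu>. cmod \<mu> = 1 \<and> v = (\<mu> * fst w, \<mu> * snd w))"
proof
  assume "phase_equiv v w"
  then show "\<exists>\<mu>. cmod \<mu> = 1 \<and> v = (\<mu> * fst w, \<mu> * snd w)"
    unfolding phase_equiv_def by (metis norm_cis)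
next
  assume "\<exists>\<mu>. cmod \<mu> = 1 \<and> v = (\<mu> * fst w, \<mu> * snd w)"
  then obtain \<mu> where "cmod \<mu> = 1" "v = (\<mu> * fst w, \<mu> * snd w)" by blast
  moreover have "cis (Arg \<mu>) = \<mu>"
    using \<open>cmod \<mu> = 1\<close> by (subst cis_Arg) (auto simp: sgn_eq)
  ultimately show "phase_equiv v w" unfolding phase_equiv_def by metis
qed

lemma phase_equiv_if_coin_apply:
  assumes "unitary2 C" and "phase_equiv (coin_apply C v) (coin_apply C w)"
  shows "phase_equiv v w"
  using assms coin_apply_inject[OF assms(1)] coin_apply_scale
  unfolding phase_equiv_iff_unimodular by metis

lemma unimodular_factor_of_mult_cnj_eq:
  fixes u v u' v' :: complex
  assumes "cmod u = cmod u'" and "u' \<noteq> 0" and "u * cnj v = u' * cnj v'"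
  shows "\<exists>\<mu>. cmod \<mu> = 1 \<and> u = \<mu> * u' \<and> v = \<mu> * v'"
proof (intro exI conjI)
  have "u \<noteq> 0" using assms(1,2) by auto
  have norms: "u * cnj u = u' * cnj u'" using assms(1) by (simp add: cmod_eq_iff_mult_cnj)
  show "cmod (u / u') = 1" using assms(1,2) by (simp add: norm_divide)
  show "u = u / u' * u'" using assms(2) by simp
  have "cnj v = u' * cnj v' / u" using assms(3) \<open>u \<noteq> 0\<close> by (simp add: field_simps)
  then have "v = cnj u' * v' / cnj u" by (metis complex_cnj_cnj complex_cnj_divide complex_cnj_mult)
  also have "\<dots> = u / u' * v'"
    using norms assms(2) \<open>u \<noteq> 0\<close> by (simp add: field_simps)
  finally show "v = u / u' * v'" .
qed

lemma walk_state_0: "walk_state C \<gamma> 0 j = (if j = 0 then \<gamma> else (0, 0))"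
  by (simp add: walk_state_def init_state_def)

lemma walk_state_Suc:
  "walk_state C \<gamma> (Suc n) j =
     (coin_a C * fst (walk_state C \<gamma> n (j - 1)) + coin_b C * snd (walk_state C \<gamma> n (j - 1)),
      coin_c C * fst (walk_state C \<gamma> n (j + 1)) + coin_d C * snd (walk_state C \<gamma> n (j + 1)))"
  by (simp add: walk_state_def walk_def coin_apply_def)

lemma walk_state_one:
  "walk_state C \<gamma> 1 1 = (fst (coin_apply C \<gamma>), 0)"
  "walk_state C \<gamma> 1 (-1) = (0, snd (coin_apply C \<gamma>))"
  by (simp_all add: walk_state_Suc walk_state_0 coin_apply_def)

lemma walk_state_three:
  assumes "coin_apply C \<gamma> = (U, D)"
  shows "walk_state C \<gamma> 3 1 =
           (coin_b C * (coin_a C * D + coin_c C * U), coin_a C * coin_c C * U)"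
    and "walk_state C \<gamma> 3 (-1) =
           (coin_b C * coin_d C * D, coin_c C * (coin_b C * D + coin_d C * U))"
  using assms
  by (simp_all add: numeral_3_eq_3 walk_state_Suc walk_state_0 coin_apply_def algebra_simps)

lemma walk_state_reflection:
  assumes "snd \<gamma> = l * fst \<gamma>" and "cmod l = 1" and "z \<noteq> 0"
    and "z * coin_a C = coin_d C" and "z * coin_b C * l\<^sup>2 = coin_c C"
  shows "walk_state C \<gamma> n (- j) =
           (z powi j * cnj l * snd (walk_state C \<gamma> n j), z powi j * l * fst (walk_state C \<gamma> n j))"
proof -
  have unit: "l * cnj l = 1" using assms(2) by (simp add: complex_norm_square[symmetric])
  show ?thesis
  proof (induction n arbitrary: j)
    case 0
    show ?case
      using unit assms(1) by (simp add: walk_state_0 prod_eq_iff mult.assoc[symmetric] mult.commute[of "cnj l" l])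
  next
    case (Suc n)
    let ?a = "coin_a C" and ?b = "coin_b C" and ?c = "coin_c C" and ?d = "coin_d C"
    define u where "u = (\<lambda>j. fst (walk_state C \<gamma> n j))"
    define v where "v = (\<lambda>j. snd (walk_state C \<gamma> n j))"
    have IH: "u (- j) = z powi j * cnj l * v j" "v (- j) = z powi j * l * u j" for j
      using Suc.IH[of j] by (simp_all add: u_def v_def)
    have zpow: "z powi (j + 1) = z powi j * z" "z powi j = z powi (j - 1) * z"
      using power_int_add_1[of z "j - 1"] power_int_add_1[of z j] assms(3) by simp_all
    have "- j - 1 = - (j + 1)" "- j + 1 = - (j - 1)" by simp_all
    then have lhs: "walk_state C \<gamma> (Suc n) (- j) =
        (?a * u (- (j + 1)) + ?b * v (- (j + 1)), ?c * u (- (j - 1)) + ?d * v (- (j - 1)))"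
      by (simp add: walk_state_Suc u_def v_def)
    have rhs: "walk_state C \<gamma> (Suc n) j =
        (?a * u (j - 1) + ?b * v (j - 1), ?c * u (j + 1) + ?d * v (j + 1))"
      by (simp add: walk_state_Suc u_def v_def)
    show ?case
      unfolding lhs rhs IH prod_eq_iff fst_conv snd_conv
      using unit zpow assms(4,5) by algebra
  qed
qed

lemma symmetric_if_reflection:
  assumes "snd \<gamma> = l * fst \<gamma>" and "cmod l = 1" and "cmod z = 1"
    and "z * coin_a C = coin_d C" and "z * coin_b C * l\<^sup>2 = coin_c C"
  shows "symmetric_in_distribution C \<gamma>"
proof -
  have "z \<noteq> 0" using assms(3) by auto
  note reflection = walk_state_reflection[OF assms(1,2) this assms(4,5)]
  show ?thesis
    unfolding symmetric_in_distribution_def walk_prob_def reflection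
    using assms(2,3) by (simp add: norm_mult norm_power_int)
qed

(* If (U, D) = coin_apply C gamma with |U| = |D|, then
   |psi_3(1)|^2 - |psi_3(-1)|^2 = 2 |b|^2 Re (interference C gamma). *)
definition coin_skew :: "coin \<Rightarrow> complex" where
  "coin_skew C = cnj (coin_a C) * coin_c C - cnj (coin_b C) * coin_d C"

definition interference :: "coin \<Rightarrow> cvec \<Rightarrow> complex" where
  "interference C \<gamma> = coin_skew C * fst (coin_apply C \<gamma>) * cnj (snd (coin_apply C \<gamma>))"

lemma symmetric_imp_cmod_eq:
  assumes "symmetric_in_distribution C \<gamma>"
  shows "cmod (fst (coin_apply C \<gamma>)) = cmod (snd (coin_apply C \<gamma>))"
proof -
  have "walk_prob C \<gamma> 1 1 = walk_prob C \<gamma> (-1) 1"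
    using assms unfolding symmetric_in_distribution_def by blast
  then show ?thesis unfolding walk_prob_def walk_state_one by simp
qed

lemma symmetric_imp_cmod_sq_half:
  assumes "unitary2 C" and "unit_vec \<gamma>" and "symmetric_in_distribution C \<gamma>"
  shows "(cmod (fst (coin_apply C \<gamma>)))\<^sup>2 = 1 / 2" and "(cmod (snd (coin_apply C \<gamma>)))\<^sup>2 = 1 / 2"
  using coin_apply_norm[OF assms(1), of \<gamma>] symmetric_imp_cmod_eq[OF assms(3)] assms(2)
  by (simp_all add: unit_vec_def)

lemma three_step_norm_difference:
  fixes a b c d U D :: complex
  assumes "c * cnj c = b * cnj b" and "d * cnj d = a * cnj a" and "U * cnj U = D * cnj D"
  shows "(cmod (b * (a * D + c * U)))\<^sup>2 + (cmod (a * c * U))\<^sup>2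
           - ((cmod (b * d * D))\<^sup>2 + (cmod (c * (b * D + d * U)))\<^sup>2)
         = (cmod b)\<^sup>2 * (2 * Re ((cnj a * c - cnj b * d) * U * cnj D))"
proof -
  let ?t = "(cnj a * c - cnj b * d) * U * cnj D"
  have "b * (a * D + c * U) * cnj (b * (a * D + c * U)) + a * c * U * cnj (a * c * U)
          - (b * d * D * cnj (b * d * D) + c * (b * D + d * U) * cnj (c * (b * D + d * U)))
        = b * cnj b * (?t + cnj ?t)"
    using assms by simp algebra
  then show ?thesis
    by (simp only: complex_norm_square[symmetric] complex_add_cnj of_real_mult[symmetric]
        of_real_add[symmetric] of_real_diff[symmetric] of_real_eq_iff)
qed

lemma symmetric_imp_Re_interference:
  assumes "unitary2 C" and "coin_b C \<noteq> 0" and "symmetric_in_distribution C \<gamma>"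
  shows "Re (interference C \<gamma>) = 0"
proof -
  obtain U D where UD: "coin_apply C \<gamma> = (U, D)" by fastforce
  have "U * cnj U = D * cnj D"
    using symmetric_imp_cmod_eq[OF assms(3)] by (simp add: UD cmod_eq_iff_mult_cnj)
  then have "walk_prob C \<gamma> 1 3 - walk_prob C \<gamma> (-1) 3
             = (cmod (coin_b C))\<^sup>2 * (2 * Re (interference C \<gamma>))"
    unfolding walk_prob_def walk_state_three[OF UD] fst_conv snd_conv
    using three_step_norm_difference unitary2_mult_cnj_eqs[OF assms(1)]
    by (simp add: interference_def coin_skew_def UD)
  moreover have "walk_prob C \<gamma> 1 3 = walk_prob C \<gamma> (-1) 3"
    using assms(3) unfolding symmetric_in_distribution_def by blast
  ultimately show ?thesis using assms(2) by simp
qed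

lemma interference_square:
  assumes "unitary2 C" and "coin_b C \<noteq> 0"
    and "unit_vec \<gamma>" and "symmetric_in_distribution C \<gamma>"
  shows "(interference C \<gamma>)\<^sup>2 = - of_real ((cmod (coin_skew C))\<^sup>2 / 4)"
proof -
  let ?t = "interference C \<gamma>"
  have "cnj ?t = - ?t"
    using symmetric_imp_Re_interference[OF assms(1,2,4)] by (simp add: complex_eq_iff)
  then have "?t\<^sup>2 = - (?t * cnj ?t)" by (simp add: power2_eq_square)
  also have "?t * cnj ?t = of_real ((cmod ?t)\<^sup>2)" by (rule complex_norm_square[symmetric])
  also have "(cmod ?t)\<^sup>2
      = (cmod (coin_skew C))\<^sup>2 * (cmod (fst (coin_apply C \<gamma>)))\<^sup>2 * (cmod (snd (coin_apply C \<gamma>)))\<^sup>2"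
    by (simp add: interference_def norm_mult power_mult_distrib)
  also have "\<dots> = (cmod (coin_skew C))\<^sup>2 / 4"
    unfolding symmetric_imp_cmod_sq_half[OF assms(1,3,4)] by simp
  finally show ?thesis .
qed

lemma coin_skew_nonzero:
  assumes "unitary2 C" and "\<not> trivial_coin C"
  shows "coin_skew C \<noteq> 0"
proof
  let ?a = "coin_a C" and ?b = "coin_b C" and ?c = "coin_c C" and ?d = "coin_d C"
  have orth: "?a * cnj ?b = - (?c * cnj ?d)"
    using unitary2_orthogonal_cnj[OF assms(1)] by (simp add: eq_neg_iff_add_eq_0)
  assume "coin_skew C = 0"
  then have "?a * cnj ?a * ?c = ?a * cnj ?b * ?d" by (simp add: coin_skew_def algebra_simps)
  also have "\<dots> = - (?c * (?d * cnj ?d))" unfolding orth by (simp add: algebra_simps)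
  also have "\<dots> = - (?c * (?a * cnj ?a))" using unitary2_mult_cnj_eqs(1)[OF assms(1)] by simp
  finally have "2 * (?a * cnj ?a) * ?c = 0" by (simp add: algebra_simps)
  then show False using assms(2) by (simp add: trivial_coin_def)
qed

lemma phase_equiv_if_interference_eq:
  assumes "unitary2 C" and "coin_skew C \<noteq> 0"
    and "unit_vec \<gamma>" and "symmetric_in_distribution C \<gamma>"
    and "unit_vec \<gamma>'" and "symmetric_in_distribution C \<gamma>'"
    and "interference C \<gamma> = interference C \<gamma>'"
  shows "phase_equiv \<gamma> \<gamma>'"
proof -
  obtain U D where UD: "coin_apply C \<gamma> = (U, D)" by fastforce
  obtain U' D' where UD': "coin_apply C \<gamma>' = (U', D')" by fastforce
  have "U * cnj D = U' * cnj D'"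
    using assms(2,7) by (simp add: interference_def UD UD')
  moreover have "(cmod U)\<^sup>2 = 1 / 2" "(cmod U')\<^sup>2 = 1 / 2"
    using symmetric_imp_cmod_sq_half(1)[OF assms(1,3,4)]
      symmetric_imp_cmod_sq_half(1)[OF assms(1,5,6)] by (simp_all add: UD UD')
  then have "cmod U = cmod U'" "U' \<noteq> 0" by (metis norm_ge_zero power2_eq_iff_nonneg, auto)
  ultimately have "phase_equiv (coin_apply C \<gamma>) (coin_apply C \<gamma>')"
    using unimodular_factor_of_mult_cnj_eq
    unfolding phase_equiv_iff_unimodular UD UD' by simp
  then show ?thesis using phase_equiv_if_coin_apply[OF assms(1)] by blast
qed

definition balanced_state :: "complex \<Rightarrow> cvec" where
  "balanced_state l = (of_real (1 / sqrt 2), l * of_real (1 / sqrt 2))"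

lemma unit_vec_balanced_state:
  assumes "cmod l = 1"
  shows "unit_vec (balanced_state l)"
  using assms by (simp add: unit_vec_def balanced_state_def norm_mult norm_divide power_divide)

lemma phase_equiv_balanced_state_iff:
  "phase_equiv (balanced_state l) (balanced_state l') \<longleftrightarrow> l = l'"
proof
  assume "phase_equiv (balanced_state l) (balanced_state l')"
  then obtain \<eta> where "1 = cis \<eta>" and "l = cis \<eta> * l'"
    by (auto simp: phase_equiv_def balanced_state_def)
  then show "l = l'" by simp
next
  assume "l = l'"
  then show "phase_equiv (balanced_state l) (balanced_state l')"
    unfolding phase_equiv_def by (metis cis_zero mult_1 prod.collapse)
qed

lemma symmetric_balanced_state:
  assumes "cmod l = 1" and "cmod z = 1"
    and "z * coin_a C = coin_d C" and "z * coin_b C * l\<^sup>2 = coin_c C"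
  shows "symmetric_in_distribution C (balanced_state l)"
  by (rule symmetric_if_reflection[OF _ assms]) (simp add: balanced_state_def)

lemma nontrivial_coin_ratio_unimodular:
  assumes "unitary2 C" and "\<not> trivial_coin C"
  shows "cmod (coin_a C * coin_c C / (coin_b C * coin_d C)) = 1"
  using assms(2) unitary2_cmod_eqs[OF assms(1)]
  by (simp add: trivial_coin_def norm_mult norm_divide)

lemma nontrivial_symmetric_balanced_state:
  assumes "unitary2 C" and "\<not> trivial_coin C"
    and "l\<^sup>2 = coin_a C * coin_c C / (coin_b C * coin_d C)"
  shows "symmetric_in_distribution C (balanced_state l)"
proof (rule symmetric_balanced_state)
  have nz: "coin_a C \<noteq> 0" "coin_b C \<noteq> 0" "coin_c C \<noteq> 0" "coin_d C \<noteq> 0"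
    using assms(2) by (auto simp: trivial_coin_def)
  have "(cmod l)\<^sup>2 = 1"
    using nontrivial_coin_ratio_unimodular[OF assms(1,2)] by (simp add: norm_power flip: assms(3))
  then show "cmod l = 1" by (metis norm_ge_zero one_power2 power2_eq_iff_nonneg zero_le_one)
  show "cmod (coin_d C / coin_a C) = 1"
    using nz unitary2_cmod_eqs[OF assms(1)] by (simp add: norm_divide)
  show "coin_d C / coin_a C * coin_a C = coin_d C" using nz by simp
  show "coin_d C / coin_a C * coin_b C * l\<^sup>2 = coin_c C" using nz by (simp add: assms(3))
qed

lemma nontrivial_coin_two_symmetric_classes:
  assumes "unitary2 C" and "\<not> trivial_coin C"
  shows "\<exists>\<gamma>1 \<gamma>2. unit_vec \<gamma>1 \<and> unit_vec \<gamma>2 \<and>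
           symmetric_in_distribution C \<gamma>1 \<and> symmetric_in_distribution C \<gamma>2 \<and>
           \<not> phase_equiv \<gamma>1 \<gamma>2 \<and>
           (\<forall>\<gamma>. unit_vec \<gamma> \<and> symmetric_in_distribution C \<gamma> \<longrightarrow>
                 phase_equiv \<gamma> \<gamma>1 \<or> phase_equiv \<gamma> \<gamma>2)"
proof -
  define l where "l = csqrt (coin_a C * coin_c C / (coin_b C * coin_d C))"
  have "cmod l = 1"
    using nontrivial_coin_ratio_unimodular[OF assms] by (simp add: l_def)
  moreover have "symmetric_in_distribution C (balanced_state l)"
    and "symmetric_in_distribution C (balanced_state (- l))"
    using nontrivial_symmetric_balanced_state[OF assms] by (simp_all add: l_def)
  ultimately have l: "unit_vec (balanced_state l)" "symmetric_in_distribution C (balanced_state l)"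
    and l': "unit_vec (balanced_state (- l))" "symmetric_in_distribution C (balanced_state (- l))"
    and distinct: "\<not> phase_equiv (balanced_state l) (balanced_state (- l))"
    by (auto simp: unit_vec_balanced_state phase_equiv_balanced_state_iff)
  have "coin_b C \<noteq> 0" using assms(2) by (auto simp: trivial_coin_def)
  note square = interference_square[OF assms(1) this]
  note determined = phase_equiv_if_interference_eq[OF assms(1) coin_skew_nonzero[OF assms]]
  let ?t = "interference C (balanced_state l)"
  have "interference C (balanced_state (- l)) \<noteq> ?t"
    using determined[OF l l'] distinct by metis
  moreover have "(interference C (balanced_state (- l)))\<^sup>2 = ?t\<^sup>2"
    using square[OF l'] square[OF l] by simp
  ultimately have opposite: "interference C (balanced_state (- l)) = - ?t"
    by (simp add: power2_eq_iff)
  show ?thesis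
  proof (intro exI conjI allI impI)
    fix \<gamma> assume \<gamma>: "unit_vec \<gamma> \<and> symmetric_in_distribution C \<gamma>"
    then have "(interference C \<gamma>)\<^sup>2 = ?t\<^sup>2"
      using square[OF l] square by simp
    then have "interference C \<gamma> = ?t \<or> interference C \<gamma> = interference C (balanced_state (- l))"
      unfolding opposite by (simp add: power2_eq_iff)
    then show "phase_equiv \<gamma> (balanced_state l) \<or> phase_equiv \<gamma> (balanced_state (- l))"
      using determined[OF _ _ l] determined[OF _ _ l'] \<gamma> by blast
  qed (use l l' distinct in auto)
qed

lemma trivial_symmetric_balanced_state:
  assumes "unitary2 C" and "trivial_coin C" and "cmod l = 1"
  shows "symmetric_in_distribution C (balanced_state l)"
  using trivial_coin_cases[OF assms(1,2)]
proof
  assume diagonal: "coin_b C = 0 \<and> coin_c C = 0"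
  then have "coin_a C * cnj (coin_a C) = 1" using assms(1) by (simp add: unitary2_def mult.commute)
  then have "cmod (coin_a C) = 1" using cmod_eq_iff_mult_cnj[of _ 1] by simp
  then show ?thesis
    using diagonal unitary2_cmod_eqs(1)[OF assms(1)] by (intro symmetric_balanced_state[OF assms(3), of "coin_d C / coin_a C"])
      (auto simp: norm_divide)
next
  assume antidiagonal: "coin_a C = 0 \<and> coin_d C = 0"
  then have "coin_c C * cnj (coin_c C) = 1" using assms(1) by (simp add: unitary2_def mult.commute)
  then have "cmod (coin_c C) = 1" using cmod_eq_iff_mult_cnj[of _ 1] by simp
  then show ?thesis
    using antidiagonal assms(3) unitary2_cmod_eqs(2)[OF assms(1)]
    by (intro symmetric_balanced_state[OF assms(3), of "coin_c C / (coin_b C * l\<^sup>2)"])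
      (auto simp: norm_divide norm_mult norm_power)
qed

lemma uncountable_unit_circle: "uncountable (sphere (0 :: complex) 1)"
  by (rule connected_uncountable[of _ 1 "-1"]) (auto intro: connected_sphere)

lemma trivial_coin_uncountably_many_symmetric:
  assumes "unitary2 C" and "trivial_coin C"
  shows "\<exists>S. uncountable S \<and>
           (\<forall>\<gamma>\<in>S. unit_vec \<gamma> \<and> symmetric_in_distribution C \<gamma>) \<and>
           (\<forall>\<gamma>\<in>S. \<forall>\<gamma>'\<in>S. \<gamma> \<noteq> \<gamma>' \<longrightarrow> \<not> phase_equiv \<gamma> \<gamma>')"
proof (intro exI conjI)
  have "inj balanced_state"
    by (rule injI) (simp add: balanced_state_def)
  then show "uncountable (balanced_state ` sphere 0 1)"
    using uncountable_unit_circle by (metis countable_image_inj_on inj_on_subset subset_UNIV)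
  show "\<forall>\<gamma>\<in>balanced_state ` sphere 0 1. unit_vec \<gamma> \<and> symmetric_in_distribution C \<gamma>"
    using unit_vec_balanced_state trivial_symmetric_balanced_state[OF assms] by auto
  show "\<forall>\<gamma>\<in>balanced_state ` sphere 0 1. \<forall>\<gamma>'\<in>balanced_state ` sphere 0 1.
          \<gamma> \<noteq> \<gamma>' \<longrightarrow> \<not> phase_equiv \<gamma> \<gamma>'"
    by (auto simp: phase_equiv_balanced_state_iff)
qed

theorem theorem1:
  fixes C :: coin
  assumes "unitary2 C"
  shows "(\<not> trivial_coin C \<longrightarrow>
            (\<exists>\<gamma>1 \<gamma>2. unit_vec \<gamma>1 \<and> unit_vec \<gamma>2 \<and>
                symmetric_in_distribution C \<gamma>1 \<and> symmetric_in_distribution C \<gamma>2 \<and>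
                \<not> phase_equiv \<gamma>1 \<gamma>2 \<and>
                (\<forall>\<gamma>. unit_vec \<gamma> \<and> symmetric_in_distribution C \<gamma> \<longrightarrow>
                      phase_equiv \<gamma> \<gamma>1 \<or> phase_equiv \<gamma> \<gamma>2)))
       \<and> (trivial_coin C \<longrightarrow>
            (\<exists>S. uncountable S \<and>
                (\<forall>\<gamma>\<in>S. unit_vec \<gamma> \<and> symmetric_in_distribution C \<gamma>) \<and>
                (\<forall>\<gamma>\<in>S. \<forall>\<gamma>'\<in>S. \<gamma> \<noteq> \<gamma>' \<longrightarrow> \<not> phase_equiv \<gamma> \<gamma>')))"
  using nontrivial_coin_two_symmetric_classes[OF assms]
    trivial_coin_uncountably_many_symmetric[OF assms] by blast

end
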